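(* Let $\mathbb{K}\in\{\mathbb{R},\mathbb{C}\}$, $\mathbf{R}_U\in\mathbb{K}^{n\times n}$ self-adjoint positive definite, $U:=\mathbb{K}^n$ with $\langle\mathbf{x},\mathbf{y}\rangle_U:=\langle\mathbf{R}_U\mathbf{x},\mathbf{y}\rangle$ and norm $\|\cdot\|_U$. Fix $\mu$, $\mathbf{A}(\mu)\in\mathbb{K}^{n\times n}$, $\mathbf{u}(\mu)\in U$, a subspace $U_r\subseteq U$ of dimension $r$ with basis matrix $\mathbf{U}_r\in\mathbb{K}^{n\times r}$, and $\mathbf{\Theta}\in\mathbb{K}^{k\times n}$. Define $\|\mathbf{y}\|_{U_r'}^{\mathbf{\Theta}}:=\max_{\mathbf{x}\in U_r\setminus\{\mathbf{0}\}}|\langle\mathbf{\Theta}\mathbf{R}_U^{-1}\mathbf{y},\mathbf{\Theta}\mathbf{x}\rangle|/\|\mathbf{\Theta}\mathbf{x}\|$, $\alpha_r^{\mathbf{\Theta}}(\mu):=\min_{\mathbf{x}\in U_r\setminus\{\mathbf{0}\}}\|\mathbf{A}(\mu)\mathbf{x}\|_{U_r'}^{\mathbf{\Theta}}/\|\mathbf{x}\|_U$ and $\beta_r^{\mathbf{\Theta}}(\mu):=\max_{\mathbf{x}\in(\mathrm{span}\{\mathbf{u}(\mu)\}+U_r)\setminus\{\mathbf{0}\}}\|\mathbf{A}(\mu)\mathbf{x}\|_{U_r'}^{\mathbf{\Theta}}/\|\mathbf{x}\|_U$. Suppose that for some $\varepsilon\in[0,1)$, $|\langle\mathbf{x},\mathbf{y}\rangle_U-\langle\mathbf{\Theta}\mathbf{x},\mathbf{\Theta}\mathbf{y}\rangle|\le\varepsilon\|\mathbf{x}\|_U\|\mathbf{y}\|_U$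 for all $\mathbf{x},\mathbf{y}\in U_r$, and that $\mathbf{U}_r$ is orthogonal with respect to $\langle\mathbf{x},\mathbf{y}\rangle_U^{\mathbf{\Theta}}:=\langle\mathbf{\Theta}\mathbf{x},\mathbf{\Theta}\mathbf{y}\rangle$, i.e., $(\mathbf{\Theta}\mathbf{U}_r)^{\mathrm{H}}\mathbf{\Theta}\mathbf{U}_r=\mathbf{I}$. Then the condition number of $\mathbf{A}_r(\mu):=\mathbf{U}_r^{\mathrm{H}}\mathbf{\Theta}^{\mathrm{H}}\mathbf{\Theta}\mathbf{R}_U^{-1}\mathbf{A}(\mu)\mathbf{U}_r\in\mathbb{K}^{r\times r}$ is bounded by $\sqrt{\frac{1+\varepsilon}{1-\varepsilon}}\,\frac{\beta_r^{\mathbf{\Theta}}(\mu)}{\alpha_r^{\mathbf{\Theta}}(\mu)}$.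
   Context: $\langle\mathbf{x},\mathbf{y}\rangle=\mathbf{x}^{\mathrm{H}}\mathbf{y}$ is the canonical inner product and $\|\cdot\|$ the Euclidean norm. The condition number of a square matrix is the ratio of its largest to smallest singular value. *)

theory Defs
  imports "HOL-Analysis.Analysis"
begin

text \<open>Scalar field K in {R, C}: a conjugation operation, identity on real, cnj on complex.\<close>
class rcl = real_normed_field +
  fixes conjg :: "'a \<Rightarrow> 'a"

instantiation real :: rcl
begin
definition conjg_real :: "real \<Rightarrow> real" where "conjg_real x = x"
instance ..
end

instantiation complex :: rcl
begin
definition conjg_complex :: "complex \<Rightarrow> complex" where "conjg_complex z = cnj z"
instance ..
end

definition cip :: "'a::rcl ^'n \<Rightarrow> 'a ^'n \<Rightarrow> 'a" where
  "cip x y = (\<Sum>i\<in>UNIV. conjg (x $ i) * y $ i)"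

definition adj :: "'a::rcl ^'n ^'m \<Rightarrow> 'a ^'m ^'n" where
  "adj M = (\<chi> i j. conjg (M $ j $ i))"

definition sa_posdef :: "'a::rcl ^'n ^'n \<Rightarrow> bool" where
  "sa_posdef R \<longleftrightarrow> adj R = R \<and>
     (\<forall>x. x \<noteq> 0 \<longrightarrow> (\<exists>c::real. c > 0 \<and> cip (R *v x) x = of_real c))"

definition ipU :: "'a::rcl ^'n ^'n \<Rightarrow> 'a ^'n \<Rightarrow> 'a ^'n \<Rightarrow> 'a" where
  "ipU R x y = cip (R *v x) y"

definition normU :: "'a::rcl ^'n ^'n \<Rightarrow> 'a ^'n \<Rightarrow> real" where
  "normU R x = sqrt (norm (ipU R x x))"

definition colspace :: "'a::rcl ^'r ^'n \<Rightarrow> ('a ^'n) set" where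
  "colspace B = range (\<lambda>c. B *v c)"

definition dual_norm_sk :: "'a::rcl ^'n ^'n \<Rightarrow> 'a ^'n ^'k \<Rightarrow> ('a ^'n) set \<Rightarrow> 'a ^'n \<Rightarrow> real" where
  "dual_norm_sk R Th Ur y =
     (SUP x \<in> Ur - {0}. norm (cip (Th *v (matrix_inv R *v y)) (Th *v x)) / norm (Th *v x))"

definition alpha_sk :: "'a::rcl ^'n ^'n \<Rightarrow> 'a ^'n ^'k \<Rightarrow> ('a ^'n) set \<Rightarrow> 'a ^'n ^'n \<Rightarrow> real" where
  "alpha_sk R Th Ur A = (INF x \<in> Ur - {0}. dual_norm_sk R Th Ur (A *v x) / normU R x)"

definition beta_sk :: "'a::rcl ^'n ^'n \<Rightarrow> 'a ^'n ^'k \<Rightarrow> ('a ^'n) set \<Rightarrow> 'a ^'n ^'n \<Rightarrow> 'a ^'n \<Rightarrow> real" where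
  "beta_sk R Th Ur A u =
     (SUP x \<in> {c *s u + y | c y. y \<in> Ur} - {0}. dual_norm_sk R Th Ur (A *v x) / normU R x)"

definition singular_values :: "'a::rcl ^'n ^'n \<Rightarrow> real set" where
  "singular_values M = {s. s \<ge> 0 \<and> (\<exists>v. v \<noteq> 0 \<and> (adj M ** M) *v v = of_real (s\<^sup>2) *s v)}"

definition smax :: "'a::rcl ^'n ^'n \<Rightarrow> real" where
  "smax M = Max (singular_values M)"

definition smin :: "'a::rcl ^'n ^'n \<Rightarrow> real" where
  "smin M = Min (singular_values M)"

definition red_mat :: "'a::rcl ^'n ^'n \<Rightarrow> 'a ^'n ^'k \<Rightarrow> 'a ^'r ^'n \<Rightarrow> 'a ^'n ^'n \<Rightarrow> 'a ^'r ^'r" where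
  "red_mat R Th Ub A = adj Ub ** adj Th ** Th ** matrix_inv R ** A ** Ub"

end

theory Submission
  imports Defs
begin

text \<open>Put \<open>Q = \<Theta> U\<^sub>r\<close>, which has orthonormal columns. On \<open>U\<^sub>r\<close> the sketched dual norm
  of \<open>y\<close> is the Euclidean norm of \<open>Q\<^sup>H \<Theta> R\<^sub>U\<^sup>-\<^sup>1 y\<close>, hence that of \<open>A(\<mu>) U\<^sub>r a\<close> is \<open>norm (A\<^sub>r a)\<close>.
  The \<open>\<epsilon>\<close>-embedding together with orthonormality gives
  \<open>sqrt (1 - \<epsilon>) * \<parallel>U\<^sub>r a\<parallel>\<^sub>U \<le> norm a \<le> sqrt (1 + \<epsilon>) * \<parallel>U\<^sub>r a\<parallel>\<^sub>U\<close>. Testing the infimum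
  defining \<open>\<alpha>\<close> at a right singular vector of \<open>A\<^sub>r\<close> for its smallest singular value, and the
  supremum defining \<open>\<beta>\<close> at one for its largest, gives \<open>\<alpha> \<le> sqrt (1 + \<epsilon>) * smin A\<^sub>r\<close> and
  \<open>sqrt (1 - \<epsilon>) * smax A\<^sub>r \<le> \<beta>\<close>.\<close>

text \<open>\<^class>\<open>rcl\<close> fixes a conjugation but imposes no laws on it; these are the laws the
  argument needs.\<close>

class rclike = rcl + euclidean_space +
  assumes conjg_add: "conjg (x + y) = conjg x + conjg y"
    and conjg_mult: "conjg (x * y) = conjg x * conjg y"
    and conjg_conjg [simp]: "conjg (conjg x) = x"
    and conjg_scaleR_one [simp]: "conjg (r *\<^sub>R 1) = r *\<^sub>R 1"
    and conjg_mult_self_scaleR: "conjg x * x = (norm x)\<^sup>2 *\<^sub>R 1"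

instance real :: rclike
  by standard (simp_all add: conjg_real_def power2_eq_square)

instance complex :: rclike
  by standard
    (auto simp: conjg_complex_def complex_norm_square mult.commute scaleR_conv_of_real
      simp del: of_real_power)

lemma conjg_of_real [simp]: "conjg (of_real r :: 'a::rclike) = of_real r"
  by (simp add: of_real_def)

lemma conjg_mult_self: "conjg x * x = (of_real ((norm x)\<^sup>2) :: 'a::rclike)"
  by (simp add: of_real_def conjg_mult_self_scaleR)

lemma conjg_zero [simp]: "conjg (0::'a::rclike) = 0"
  using conjg_of_real[of 0] by simp

lemma conjg_diff: "conjg (x - y :: 'a::rclike) = conjg x - conjg y"
  using conjg_add[of "x - y" y] by (simp add: eq_diff_eq)

lemma conjg_sum: "conjg (\<Sum>i\<in>A. f i :: 'a::rclike) = (\<Sum>i\<in>A. conjg (f i))"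
  by (induction A rule: infinite_finite_induct) (auto simp: conjg_add)

lemma norm_conjg [simp]: "norm (conjg x) = norm (x::'a::rclike)"
proof -
  have "(of_real ((norm (conjg x))\<^sup>2) :: 'a) = of_real ((norm x)\<^sup>2)"
    by (metis conjg_mult_self conjg_conjg mult.commute)
  then show ?thesis
    by (metis norm_ge_zero of_real_eq_iff power2_eq_iff_nonneg)
qed

lemma continuous_on_conjg [continuous_intros]:
  "continuous_on S f \<Longrightarrow> continuous_on S (\<lambda>x. conjg (f x :: 'a::rclike))"
  by (rule continuous_on_compose2[of UNIV conjg], unfold continuous_on_iff)
    (auto simp: dist_norm conjg_diff[symmetric] intro!: exI)

lemma cip_add_left: "cip (x + y) z = cip x z + cip y (z::'a::rclike^'n)"
  by (simp add: cip_def sum.distrib distrib_right conjg_add)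

lemma cip_add_right: "cip x (y + z) = cip x y + cip x (z::'a::rclike^'n)"
  by (simp add: cip_def sum.distrib distrib_left)

lemma cip_diff_left: "cip (x - y) z = cip x z - cip y (z::'a::rclike^'n)"
  by (simp add: cip_def sum_subtractf left_diff_distrib conjg_diff)

lemma cip_diff_right: "cip x (y - z) = cip x y - cip x (z::'a::rclike^'n)"
  by (simp add: cip_def sum_subtractf right_diff_distrib)

lemma cip_scale_left: "cip (c *s x) y = conjg c * cip x (y::'a::rclike^'n)"
  by (simp add: cip_def sum_distrib_left mult_ac conjg_mult)

lemma cip_scale_right: "cip x (c *s y) = c * cip x (y::'a::rclike^'n)"
  by (simp add: cip_def sum_distrib_left mult_ac)

lemma cip_zero_left [simp]: "cip 0 (y::'a::rclike^'n) = 0"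
  by (simp add: cip_def)

lemma cip_zero_right [simp]: "cip x (0::'a::rclike^'n) = 0"
  by (simp add: cip_def)

lemma cip_sum_right: "cip x (\<Sum>w\<in>S. f w) = (\<Sum>w\<in>S. cip x (f w::'a::rclike^'n))"
  by (induction S rule: infinite_finite_induct) (auto simp: cip_add_right)

lemma cip_self: "cip x x = of_real ((norm (x::'a::rclike^'n))\<^sup>2)"
proof -
  have "(norm x)\<^sup>2 = (\<Sum>i\<in>UNIV. (norm (x $ i))\<^sup>2)"
    unfolding norm_vec_def L2_set_def by (simp add: sum_nonneg)
  then show ?thesis
    by (simp add: cip_def conjg_mult_self)
qed

lemma cip_self_eq_zero_iff [simp]: "cip x x = 0 \<longleftrightarrow> x = (0::'a::rclike^'n)"
  by (simp add: cip_self)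

lemma norm_cip_le: "norm (cip x y) \<le> norm x * norm (y::'a::rclike^'n)"
proof -
  have "norm (cip x y) \<le> (\<Sum>i\<in>UNIV. norm (x $ i) * norm (y $ i))"
    unfolding cip_def by (rule order_trans[OF norm_sum]) (simp add: norm_mult)
  also have "\<dots> \<le> norm x * norm y"
    using L2_set_mult_ineq[of "\<lambda>i. norm (x $ i)" "\<lambda>i. norm (y $ i)" UNIV]
    by (simp add: norm_vec_def)
  finally show ?thesis .
qed

lemma adj_adj [simp]: "adj (adj M) = (M::'a::rclike^'n^'m)"
  by (simp add: adj_def vec_eq_iff)

lemma adj_matrix_mult: "adj (A ** B) = adj B ** adj (A::'a::rclike^'n^'m)"
  by (simp add: adj_def matrix_matrix_mult_def vec_eq_iff conjg_sum conjg_mult mult.commute)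

lemma cip_adj_left: "cip (adj M *v x) y = cip x (M *v (y::'a::rclike^'n))"
proof -
  have "cip x (M *v y) = (\<Sum>i\<in>UNIV. \<Sum>j\<in>UNIV. conjg (x $ i) * (M $ i $ j * y $ j))"
    by (simp add: cip_def matrix_vector_mult_def sum_distrib_left)
  also have "\<dots> = (\<Sum>j\<in>UNIV. (\<Sum>i\<in>UNIV. conjg (x $ i) * M $ i $ j) * y $ j)"
    by (subst sum.swap) (simp add: sum_distrib_right mult.assoc)
  also have "\<dots> = cip (adj M *v x) y"
    by (simp add: cip_def matrix_vector_mult_def adj_def conjg_sum conjg_mult mult.commute)
  finally show ?thesis ..
qed

lemma cip_adj_right: "cip x (adj M *v y) = cip (M *v x) (y::'a::rclike^'n)"
  using cip_adj_left[of "adj M" x y] by simp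

lemma norm_isometry:
  fixes Q :: "'a::rclike^'r^'k"
  assumes "adj Q ** Q = mat 1"
  shows "norm (Q *v a) = norm a"
proof -
  have "cip (Q *v a) (Q *v a) = cip a a"
    by (simp add: cip_adj_right[symmetric] matrix_vector_mul_assoc assms)
  then show ?thesis
    by (simp add: cip_self power2_eq_iff_nonneg del: of_real_power)
qed

lemma scaleR_vec_eq_scalar_mult: "r *\<^sub>R (x::'a::rclike^'n) = of_real r *s x"
proof -
  have "(r *\<^sub>R x) $ i = (of_real r *s x) $ i" for i
  proof -
    have "(r *\<^sub>R x) $ i = r *\<^sub>R (x $ i)"
      by (rule vector_scaleR_component)
    also have "\<dots> = of_real r * (x $ i)"
      by (rule scaleR_conv_of_real)
    finally show ?thesis by simp
  qed
  then show ?thesis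
    by (simp add: vec_eq_iff del: vector_scaleR_component)
qed

lemma bounded_linear_matrix_vector_mult: "bounded_linear (\<lambda>x::'a::rclike^'n. M *v x)"
  unfolding linear_conv_bounded_linear[symmetric]
  by (rule linearI) (simp_all add: matrix_vector_right_distrib scaleR_vec_eq_scalar_mult vec.scale)

lemma SUP_norm_cip_div_norm:
  "(SUP a\<in>UNIV - {0}. norm (cip w a) / norm a) = norm (w::'a::rclike^'n)"
proof -
  obtain a :: "'a^'n" where a: "a \<noteq> 0" "w = 0 \<or> a = w"
    by (metis axis_eq_0_iff zero_neq_one)
  have "norm (cip w a) / norm a = norm w"
    using a by (auto simp: cip_self power2_eq_square norm_mult)
  moreover have "norm (cip w b) / norm b \<le> norm w" for b
    using norm_cip_le[of w b] by (cases "b = 0") (auto simp: divide_le_eq)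
  ultimately show ?thesis
    using a by (intro cSup_eq_maximum) (auto intro: rev_image_eqI[of a])
qed

lemma homogeneous_quadratic_le:
  fixes q :: "'a::real_normed_vector \<Rightarrow> real"
  assumes hom: "\<And>c x. q (c *\<^sub>R x) = c\<^sup>2 * q x"
    and sphere: "\<And>x. norm x = 1 \<Longrightarrow> q x \<le> m"
  shows "q x \<le> m * (norm x)\<^sup>2"
proof (cases "x = 0")
  case True
  then show ?thesis using hom[of 0 0] by simp
next
  case False
  have "q x = (norm x)\<^sup>2 * q (x /\<^sub>R norm x)"
    using hom[of "norm x" "x /\<^sub>R norm x"] False by simp
  also have "\<dots> \<le> (norm x)\<^sup>2 * m"
    using sphere[of "x /\<^sub>R norm x"] False by (intro mult_left_mono) auto
  finally show ?thesis by (simp add: mult.commute)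
qed

lemma nonneg_quadratic_imp_linear_coeff_zero:
  fixes b c :: real
  assumes "\<And>t. 0 \<le> b * t + c * t\<^sup>2"
  shows "b = 0"
proof -
  define s where "s = 1 / (\<bar>c\<bar> + 1)"
  have s: "s > 0" "c * s - 1 < 0"
    by (auto simp: s_def field_simps)
  have "0 \<le> b * (- b * s) + c * (- b * s)\<^sup>2"
    by (rule assms)
  also have "\<dots> = b\<^sup>2 * s * (c * s - 1)"
    by (simp add: power2_eq_square algebra_simps)
  finally have "b\<^sup>2 * s \<le> 0"
    using s by (simp add: zero_le_mult_iff)
  then show ?thesis
    using s by (simp add: mult_le_0_iff)
qed

lemma rayleigh_maximizer_eigenvector:
  fixes M :: "'a::rclike^'n^'m"
  assumes le: "\<And>w. (norm (M *v w))\<^sup>2 \<le> m * (norm w)\<^sup>2"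
    and eq: "(norm (M *v a))\<^sup>2 = m * (norm a)\<^sup>2"
  shows "(adj M ** M) *v a = of_real m *s a"
proof -
  define C where "C w = of_real m *s w - (adj M ** M) *v w" for w
  have form: "cip w (C w) = of_real (m * (norm w)\<^sup>2 - (norm (M *v w))\<^sup>2)" for w
    by (simp add: C_def cip_diff_right cip_scale_right cip_self cip_adj_right
        matrix_vector_mul_assoc[symmetric])
  have herm: "cip x (C y) = cip (C x) y" for x y
    by (simp add: C_def cip_diff_right cip_diff_left cip_scale_right cip_scale_left
        cip_adj_left cip_adj_right matrix_vector_mul_assoc[symmetric])
  have lin: "C (x + c *s y) = C x + c *s C y" for x y c
    by (simp add: C_def vec.add vec.scale vector_add_ldistrib vector_ssub_ldistrib
        vector_smult_assoc mult.commute)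
  txt \<open>The form of \<open>C\<close> is nonnegative and vanishes at \<open>a\<close>; along the line \<open>a + t g\<close> it is a
    nonnegative quadratic in \<open>t\<close> whose linear coefficient is \<open>2 \<parallel>C a\<parallel>\<^sup>2\<close>.\<close>
  define g where "g = C a"
  define P where "P = m * (norm g)\<^sup>2 - (norm (M *v g))\<^sup>2"
  have "cip a g = 0"
    using form[of a] eq by (simp add: g_def)
  have "0 \<le> 2 * (norm g)\<^sup>2 * t + P * t\<^sup>2" for t
  proof -
    define w where "w = a + of_real t *s g"
    have "cip w (C w) = cip a g + of_real t * cip a (C g) + of_real t * cip g g
        + of_real t * of_real t * cip g (C g)"
      by (simp add: w_def lin cip_add_left cip_add_right cip_scale_left cip_scale_right
          flip: g_def) (simp add: algebra_simps)
    also have "cip a (C g) = cip g g"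
      by (simp add: herm g_def)
    finally have "cip w (C w) = of_real (2 * (norm g)\<^sup>2 * t + P * t\<^sup>2)"
      using \<open>cip a g = 0\<close> form[of g]
      by (simp add: cip_self P_def algebra_simps power2_eq_square)
    with form[of w] le[of w] show ?thesis
      by (metis diff_ge_0_iff_ge of_real_eq_iff)
  qed
  then have "2 * (norm g)\<^sup>2 = 0"
    by (rule nonneg_quadratic_imp_linear_coeff_zero)
  then show ?thesis
    by (simp add: g_def C_def)
qed

lemma hermitian_eigenvectors_orthogonal:
  fixes B :: "'a::rclike^'n^'n"
  assumes "adj B = B" "B *v v = of_real a *s v" "B *v w = of_real b *s w" "a \<noteq> b"
  shows "cip v w = 0"
proof -
  have "of_real a * cip v w = of_real b * cip v w"
    using cip_adj_left[of B v w] assms(1-3) by (simp add: cip_scale_left cip_scale_right)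
  with assms(4) show ?thesis
    by simp
qed

lemma independent_if_pairwise_cip_orthogonal:
  fixes S :: "('a::rclike^'n) set"
  assumes "0 \<notin> S" and orth: "\<And>v w. v \<in> S \<Longrightarrow> w \<in> S \<Longrightarrow> v \<noteq> w \<Longrightarrow> cip v w = 0"
  shows "vec.independent S"
  unfolding vec.independent_explicit_finite_subsets
proof (intro allI impI ballI)
  fix T u v
  assume T: "T \<subseteq> S" "finite T" and sum0: "(\<Sum>w\<in>T. u w *s w) = 0" and "v \<in> T"
  have "0 = cip v (\<Sum>w\<in>T. u w *s w)"
    using sum0 by simp
  also have "\<dots> = u v * cip v v + (\<Sum>w\<in>T - {v}. u w * cip v w)"
    using T \<open>v \<in> T\<close> by (simp add: cip_sum_right cip_scale_right cip_add_right sum.remove)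
  also have "(\<Sum>w\<in>T - {v}. u w * cip v w) = 0"
    using T \<open>v \<in> T\<close> orth by (intro sum.neutral) auto
  finally show "u v = 0"
    using assms(1) T \<open>v \<in> T\<close> by auto
qed

lemma singular_value_witness:
  assumes "s \<in> singular_values (M::'a::rclike^'n^'n)"
  obtains v where "v \<noteq> 0" "norm (M *v v) = s * norm v"
proof -
  obtain v where s: "s \<ge> 0" and v: "v \<noteq> 0" "(adj M ** M) *v v = of_real (s\<^sup>2) *s v"
    using assms unfolding singular_values_def by auto
  have "(of_real ((norm (M *v v))\<^sup>2) :: 'a) = cip v ((adj M ** M) *v v)"
    by (simp add: cip_self cip_adj_right matrix_vector_mul_assoc[symmetric])
  also have "\<dots> = of_real ((s * norm v)\<^sup>2)"
    using v by (simp add: cip_scale_right cip_self power_mult_distrib)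
  finally have "norm (M *v v) = s * norm v"
    using s by (simp add: power2_eq_iff_nonneg del: of_real_power)
  with v that show ?thesis
    by blast
qed

lemma finite_singular_values: "finite (singular_values (M::'a::rclike^'n^'n))"
proof -
  define S where "S = singular_values M"
  define ev where "ev s = (SOME v. v \<noteq> 0 \<and> (adj M ** M) *v v = of_real (s\<^sup>2) *s v)" for s
  have ev: "ev s \<noteq> 0 \<and> (adj M ** M) *v ev s = of_real (s\<^sup>2) *s ev s" if "s \<in> S" for s
    unfolding ev_def by (rule someI_ex) (use that in \<open>auto simp: S_def singular_values_def\<close>)
  have sq_inj: "s = t" if "s \<in> S" "t \<in> S" "s\<^sup>2 = t\<^sup>2" for s t
    using that by (simp add: S_def singular_values_def power2_eq_iff_nonneg)
  have "inj_on ev S"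
  proof (rule inj_onI)
    fix s t
    assume st: "s \<in> S" "t \<in> S" "ev s = ev t"
    then have "of_real (s\<^sup>2) *s ev s = of_real (t\<^sup>2) *s ev s"
      using ev by metis
    then have "(of_real (s\<^sup>2) :: 'a) = of_real (t\<^sup>2)"
      using ev[OF st(1)] by (simp del: of_real_power)
    then have "s\<^sup>2 = t\<^sup>2"
      by (simp only: of_real_eq_iff)
    then show "s = t"
      using sq_inj st by blast
  qed
  moreover have "vec.independent (ev ` S)"
  proof (rule independent_if_pairwise_cip_orthogonal)
    show "0 \<notin> ev ` S"
      using ev by auto
    show "cip v w = 0" if vw: "v \<in> ev ` S" "w \<in> ev ` S" "v \<noteq> w" for v w
    proof -
      obtain s t where st: "s \<in> S" "t \<in> S" "v = ev s" "w = ev t"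
        using vw by blast
      then have "s\<^sup>2 \<noteq> t\<^sup>2"
        using vw(3) sq_inj by auto
      then show ?thesis
        using ev[OF st(1)] ev[OF st(2)] st(3,4)
        by (intro hermitian_eigenvectors_orthogonal[of "adj M ** M" _ "s\<^sup>2" _ "t\<^sup>2"])
          (simp_all add: adj_matrix_mult)
    qed
  qed
  ultimately show ?thesis
    using vec.finiteI_independent finite_image_iff S_def by blast
qed

lemma singular_values_nonempty: "singular_values (M::'a::rclike^'n^'n) \<noteq> {}"
proof -
  define f where "f a = (norm (M *v a))\<^sup>2" for a :: "'a^'n"
  have "continuous_on (sphere 0 1) f"
    unfolding f_def
    by (intro continuous_intros linear_continuous_on bounded_linear_matrix_vector_mult)
  moreover have "sphere (0::'a^'n) 1 \<noteq> {}"
    by simp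
  ultimately obtain a where a: "a \<in> sphere 0 1" and max: "\<And>y. y \<in> sphere 0 1 \<Longrightarrow> f y \<le> f a"
    using continuous_attains_sup[OF compact_sphere] by blast
  have "f w \<le> f a * (norm w)\<^sup>2" for w
  proof (rule homogeneous_quadratic_le)
    show "f (c *\<^sub>R x) = c\<^sup>2 * f x" for c x
      using linear_scale[OF bounded_linear.linear[OF bounded_linear_matrix_vector_mult], of M c x]
      by (simp add: f_def power_mult_distrib)
  qed (use max in auto)
  then have "(adj M ** M) *v a = of_real (f a) *s a"
    using a by (intro rayleigh_maximizer_eigenvector) (simp_all add: f_def)
  moreover have "(sqrt (f a))\<^sup>2 = f a"
    by (simp add: f_def)
  ultimately have "sqrt (f a) \<in> singular_values M"
    using a unfolding singular_values_def
    by (auto simp: f_def simp del: of_real_power intro!: exI[of _ a])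
  then show ?thesis
    by blast
qed

lemma ipU_self:
  assumes "sa_posdef R"
  shows "ipU R x x = of_real ((normU R x)\<^sup>2)"
proof (cases "x = 0")
  case False
  then obtain c where "c > 0" "ipU R x x = of_real c"
    using assms unfolding sa_posdef_def ipU_def by blast
  then show ?thesis
    by (simp add: normU_def)
qed (simp add: ipU_def normU_def cip_def)

lemma normU_pos:
  assumes "sa_posdef R" "x \<noteq> 0"
  shows "normU R x > 0"
proof -
  obtain c where "c > 0" "ipU R x x = of_real c"
    using assms unfolding sa_posdef_def ipU_def by blast
  then show ?thesis
    by (simp add: normU_def)
qed

lemma normU_square_scaleR:
  "(normU R (c *\<^sub>R x))\<^sup>2 = c\<^sup>2 * (normU (R::'a::rclike^'n^'n) x)\<^sup>2"
  by (simp add: normU_def ipU_def scaleR_vec_eq_scalar_mult vec.scale cip_scale_left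
      cip_scale_right norm_mult power2_eq_square)

lemma normU_lower_bound:
  fixes R :: "'a::rclike^'n^'n"
  assumes "sa_posdef R"
  obtains c where "c > 0" "\<And>x. c * norm x \<le> normU R x"
proof -
  define q where "q x = (normU R x)\<^sup>2" for x :: "'a^'n"
  have "continuous_on (sphere 0 1) q"
    unfolding q_def normU_def ipU_def cip_def
    by (intro continuous_intros continuous_on_component linear_continuous_on
        bounded_linear_matrix_vector_mult) auto
  moreover have "sphere (0::'a^'n) 1 \<noteq> {}"
    by simp
  ultimately obtain a where a: "a \<in> sphere 0 1" and min: "\<And>y. y \<in> sphere 0 1 \<Longrightarrow> q a \<le> q y"
    using continuous_attains_inf[OF compact_sphere] by blast
  have "a \<noteq> 0"
    using a by auto
  then have "q a > 0"
    using normU_pos[OF assms, of a] by (simp add: q_def)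
  have "- q x \<le> - q a * (norm x)\<^sup>2" for x
    by (rule homogeneous_quadratic_le) (use min in \<open>auto simp: q_def normU_square_scaleR\<close>)
  then have "(sqrt (q a) * norm x)\<^sup>2 \<le> (normU R x)\<^sup>2" for x
    using \<open>q a > 0\<close> by (simp add: q_def power_mult_distrib)
  then have "sqrt (q a) * norm x \<le> normU R x" for x
    by (rule power2_le_imp_le) (simp add: normU_def)
  with \<open>q a > 0\<close> show ?thesis
    using that[of "sqrt (q a)"] by simp
qed

lemma colspace_diff_zero:
  assumes "\<forall>c. Ub *v c = 0 \<longrightarrow> c = 0"
  shows "colspace Ub - {0} = (\<lambda>c. Ub *v c) ` (UNIV - {0})"
  using assms unfolding colspace_def by auto

lemma dual_norm_sk_eq:
  fixes Ub :: "'a::rclike^'r^'n" and Th :: "'a^'n^'k"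
  assumes inj: "\<forall>c. Ub *v c = 0 \<longrightarrow> c = 0"
    and orth: "adj (Th ** Ub) ** (Th ** Ub) = mat 1"
  shows "dual_norm_sk R Th (colspace Ub) y = norm (adj (Th ** Ub) *v (Th *v (matrix_inv R *v y)))"
proof -
  have "norm (cip z (Th *v (Ub *v a))) / norm (Th *v (Ub *v a))
      = norm (cip (adj (Th ** Ub) *v z) a) / norm a" for z a
    by (simp add: matrix_vector_mul_assoc cip_adj_left norm_isometry[OF orth])
  then show ?thesis
    unfolding dual_norm_sk_def colspace_diff_zero[OF inj] image_image
    by (simp add: SUP_norm_cip_div_norm)
qed

lemma red_mat_mult_vec:
  fixes Ub :: "'a::rclike^'r^'n"
  shows "red_mat R Th Ub A *v a = adj (Th ** Ub) *v (Th *v (matrix_inv R *v (A *v (Ub *v a))))"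
  by (simp add: red_mat_def adj_matrix_mult matrix_vector_mul_assoc matrix_mul_assoc)

lemma sketch_embedding_norm_bounds:
  fixes Ub :: "'a::rclike^'r^'n" and Th :: "'a^'n^'k"
  assumes "sa_posdef R" "0 \<le> \<epsilon>" "\<epsilon> < 1"
    and eps: "\<forall>x\<in>colspace Ub. \<forall>y\<in>colspace Ub.
          norm (ipU R x y - cip (Th *v x) (Th *v y)) \<le> \<epsilon> * normU R x * normU R y"
    and orth: "adj (Th ** Ub) ** (Th ** Ub) = mat 1"
  shows "sqrt (1 - \<epsilon>) * normU R (Ub *v a) \<le> norm a"
    and "norm a \<le> sqrt (1 + \<epsilon>) * normU R (Ub *v a)"
proof -
  have "Ub *v a \<in> colspace Ub"
    unfolding colspace_def by auto
  moreover have "ipU R (Ub *v a) (Ub *v a) - cip (Th *v (Ub *v a)) (Th *v (Ub *v a))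
      = of_real ((normU R (Ub *v a))\<^sup>2 - (norm a)\<^sup>2)"
    by (simp add: ipU_self[OF assms(1)] cip_self matrix_vector_mul_assoc norm_isometry[OF orth])
  ultimately have "\<bar>(normU R (Ub *v a))\<^sup>2 - (norm a)\<^sup>2\<bar> \<le> \<epsilon> * (normU R (Ub *v a))\<^sup>2"
    using eps by (metis norm_of_real power2_eq_square mult.assoc)
  then have "(sqrt (1 - \<epsilon>) * normU R (Ub *v a))\<^sup>2 \<le> (norm a)\<^sup>2"
    and "(norm a)\<^sup>2 \<le> (sqrt (1 + \<epsilon>) * normU R (Ub *v a))\<^sup>2"
    using assms(2,3) by (simp_all add: power_mult_distrib algebra_simps abs_le_iff)
  then show "sqrt (1 - \<epsilon>) * normU R (Ub *v a) \<le> norm a"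
    and "norm a \<le> sqrt (1 + \<epsilon>) * normU R (Ub *v a)"
    using assms(2,3) by (auto intro!: power2_le_imp_le simp: normU_def)
qed

lemma alpha_sk_le:
  fixes Ub :: "'a::rclike^'r^'n" and Th :: "'a^'n^'k"
  assumes inj: "\<forall>c. Ub *v c = 0 \<longrightarrow> c = 0"
    and orth: "adj (Th ** Ub) ** (Th ** Ub) = mat 1"
    and "a \<noteq> 0"
  shows "alpha_sk R Th (colspace Ub) A \<le> norm (red_mat R Th Ub A *v a) / normU R (Ub *v a)"
proof -
  have "Ub *v a \<in> colspace Ub - {0}"
    using assms unfolding colspace_def by auto
  then show ?thesis
    unfolding alpha_sk_def
    by (intro cINF_lower2[of _ _ "Ub *v a"])
      (auto intro!: bdd_belowI2[where m=0] simp: dual_norm_sk_eq[OF inj orth] red_mat_mult_vec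
        normU_def)
qed

lemma beta_sk_ge:
  fixes Ub :: "'a::rclike^'r^'n" and Th :: "'a^'n^'k"
  assumes "sa_posdef R"
    and inj: "\<forall>c. Ub *v c = 0 \<longrightarrow> c = 0"
    and orth: "adj (Th ** Ub) ** (Th ** Ub) = mat 1"
    and "a \<noteq> 0"
  shows "norm (red_mat R Th Ub A *v a) / normU R (Ub *v a) \<le> beta_sk R Th (colspace Ub) A u"
proof -
  define N where "N = adj (Th ** Ub) ** Th ** matrix_inv R ** A"
  have dual: "dual_norm_sk R Th (colspace Ub) (A *v x) = norm (N *v x)" for x
    by (simp add: dual_norm_sk_eq[OF inj orth] N_def matrix_vector_mul_assoc matrix_mul_assoc)
  obtain K where K: "\<And>x. norm (N *v x) \<le> norm x * K"
    using bounded_linear.bounded[OF bounded_linear_matrix_vector_mult] by blast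
  obtain c where c: "c > 0" "\<And>x. c * norm x \<le> normU R x"
    using normU_lower_bound[OF assms(1)] by blast
  have bound: "norm (N *v x) / normU R x \<le> \<bar>K\<bar> / c" for x
  proof (cases "x = 0")
    case False
    have "norm (N *v x) \<le> \<bar>K\<bar> * norm x"
      using K[of x] by (metis abs_ge_self mult.commute mult_right_mono norm_ge_zero order_trans)
    then have "norm (N *v x) * c \<le> \<bar>K\<bar> * (c * norm x)"
      using \<open>c > 0\<close> by (simp add: mult_right_mono mult_ac)
    also have "\<dots> \<le> \<bar>K\<bar> * normU R x"
      using c(2) by (rule mult_left_mono) simp
    finally show ?thesis
      using normU_pos[OF assms(1) False] \<open>c > 0\<close> by (simp add: field_simps)
  qed (use \<open>c > 0\<close> in \<open>simp add: normU_def ipU_def cip_def\<close>)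
  have "bdd_above ((\<lambda>x. dual_norm_sk R Th (colspace Ub) (A *v x) / normU R x) ` S)" for S
    unfolding dual by (intro bdd_aboveI2) (rule bound)
  moreover have "Ub *v a \<in> {c *s u + y | c y. y \<in> colspace Ub} - {0}"
    using assms(4) inj unfolding colspace_def by (auto intro: exI[of _ 0])
  ultimately show ?thesis
    unfolding beta_sk_def
    by (rule cSUP_upper2) (simp add: dual_norm_sk_eq[OF inj orth] red_mat_mult_vec)
qed

lemma red_mat_condition_number_bound:
  fixes R A :: "'a::rclike^'n^'n" and u :: "'a^'n" and Ub :: "'a^'r^'n" and Th :: "'a^'n^'k"
  assumes posdef: "sa_posdef R" and inj: "\<forall>c. Ub *v c = 0 \<longrightarrow> c = 0"
    and "0 \<le> \<epsilon>" "\<epsilon> < 1"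
    and eps: "\<forall>x\<in>colspace Ub. \<forall>y\<in>colspace Ub.
          norm (ipU R x y - cip (Th *v x) (Th *v y)) \<le> \<epsilon> * normU R x * normU R y"
    and orth: "adj (Th ** Ub) ** (Th ** Ub) = mat 1"
  shows "smax (red_mat R Th Ub A) * alpha_sk R Th (colspace Ub) A
          \<le> sqrt ((1 + \<epsilon>) / (1 - \<epsilon>)) * beta_sk R Th (colspace Ub) A u * smin (red_mat R Th Ub A)"
proof -
  define Ar where "Ar = red_mat R Th Ub A"
  note bounds = sketch_embedding_norm_bounds[OF posdef \<open>0 \<le> \<epsilon>\<close> \<open>\<epsilon> < 1\<close> eps orth]
  have pos: "normU R (Ub *v a) > 0" if "a \<noteq> 0" for a
    using normU_pos[OF posdef] inj that by blast
  have "smin Ar \<in> singular_values Ar" "smax Ar \<in> singular_values Ar"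
    unfolding smin_def smax_def
    using finite_singular_values[of Ar] singular_values_nonempty[of Ar] by (simp_all add: Min_in Max_in)
  then have "smin Ar \<ge> 0" "smax Ar \<ge> 0"
    unfolding singular_values_def by auto
  obtain a where a: "a \<noteq> 0" "norm (Ar *v a) = smin Ar * norm a"
    using singular_value_witness[OF \<open>smin Ar \<in> _\<close>] by blast
  obtain b where b: "b \<noteq> 0" "norm (Ar *v b) = smax Ar * norm b"
    using singular_value_witness[OF \<open>smax Ar \<in> _\<close>] by blast
  have "alpha_sk R Th (colspace Ub) A \<le> norm (Ar *v a) / normU R (Ub *v a)"
    unfolding Ar_def by (rule alpha_sk_le[OF inj orth a(1)])
  also have "\<dots> \<le> sqrt (1 + \<epsilon>) * smin Ar"
    using mult_left_mono[OF bounds(2)[of a] \<open>smin Ar \<ge> 0\<close>] pos[OF a(1)]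
    by (simp add: a(2) divide_le_eq mult_ac)
  finally have alpha: "alpha_sk R Th (colspace Ub) A \<le> sqrt (1 + \<epsilon>) * smin Ar" .
  have "sqrt (1 - \<epsilon>) * smax Ar \<le> norm (Ar *v b) / normU R (Ub *v b)"
    using mult_left_mono[OF bounds(1)[of b] \<open>smax Ar \<ge> 0\<close>] pos[OF b(1)]
    by (simp add: b(2) le_divide_eq mult_ac)
  also have "\<dots> \<le> beta_sk R Th (colspace Ub) A u"
    unfolding Ar_def by (rule beta_sk_ge[OF posdef inj orth b(1)])
  finally have beta: "sqrt (1 - \<epsilon>) * smax Ar \<le> beta_sk R Th (colspace Ub) A u" .
  have "smax Ar * alpha_sk R Th (colspace Ub) A \<le> sqrt (1 + \<epsilon>) * smax Ar * smin Ar"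
    using mult_left_mono[OF alpha \<open>smax Ar \<ge> 0\<close>] by (simp add: mult_ac)
  also have "\<dots> = sqrt ((1 + \<epsilon>) / (1 - \<epsilon>)) * (sqrt (1 - \<epsilon>) * smax Ar) * smin Ar"
    using \<open>\<epsilon> < 1\<close> by (simp add: real_sqrt_divide)
  also have "\<dots> \<le> sqrt ((1 + \<epsilon>) / (1 - \<epsilon>)) * beta_sk R Th (colspace Ub) A u * smin Ar"
    using beta \<open>smin Ar \<ge> 0\<close> \<open>0 \<le> \<epsilon>\<close> \<open>\<epsilon> < 1\<close>
    by (intro mult_right_mono mult_left_mono) auto
  finally show ?thesis
    unfolding Ar_def .
qed

theorem proposition4p3:
  shows
  "(\<forall>(R::real^'n^'n) (A::real^'n^'n) (u::real^'n) (Ub::real^'r^'n) (Th::real^'n^'k) (\<epsilon>::real).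
      sa_posdef R \<and> (\<forall>c. Ub *v c = 0 \<longrightarrow> c = 0) \<and> 0 \<le> \<epsilon> \<and> \<epsilon> < 1 \<and>
      (\<forall>x\<in>colspace Ub. \<forall>y\<in>colspace Ub.
          norm (ipU R x y - cip (Th *v x) (Th *v y)) \<le> \<epsilon> * normU R x * normU R y) \<and>
      adj (Th ** Ub) ** (Th ** Ub) = mat 1
      \<longrightarrow> smax (red_mat R Th Ub A) * alpha_sk R Th (colspace Ub) A
          \<le> sqrt ((1 + \<epsilon>) / (1 - \<epsilon>)) * beta_sk R Th (colspace Ub) A u * smin (red_mat R Th Ub A))
   \<and>
   (\<forall>(R::complex^'n^'n) (A::complex^'n^'n) (u::complex^'n) (Ub::complex^'r^'n) (Th::complex^'n^'k) (\<epsilon>::real).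
      sa_posdef R \<and> (\<forall>c. Ub *v c = 0 \<longrightarrow> c = 0) \<and> 0 \<le> \<epsilon> \<and> \<epsilon> < 1 \<and>
      (\<forall>x\<in>colspace Ub. \<forall>y\<in>colspace Ub.
          norm (ipU R x y - cip (Th *v x) (Th *v y)) \<le> \<epsilon> * normU R x * normU R y) \<and>
      adj (Th ** Ub) ** (Th ** Ub) = mat 1
      \<longrightarrow> smax (red_mat R Th Ub A) * alpha_sk R Th (colspace Ub) A
          \<le> sqrt ((1 + \<epsilon>) / (1 - \<epsilon>)) * beta_sk R Th (colspace Ub) A u * smin (red_mat R Th Ub A))"
  by (auto intro: red_mat_condition_number_bound)

end
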